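(* For every real $u>1$, $$\sigma(u)=1+\sum_{0<k<u}P_k(u),\qquad \rho(u)=1+\sum_{0<k<u}(-1)^kP_k(u),$$ where the sums run over integers $k$ with $0<k<u$.
   Context: $\rho$ is the Dickman function: continuous on $[0,\infty)$, $\rho(u)=1$ on $[0,1]$, $u\rho'(u)=-\rho(u-1)$ for $u>1$. $\omega$ is the Buchstab function: continuous on $[1,\infty)$, $u\omega(u)=1$ on $[1,2]$, $u\omega'(u)=\omega(u-1)-\omega(u)$ for $u>2$; and $\sigma(u)=(u+1)\omega(u+1)$. The functions $P_k$ are defined by $P_0(u)=1$ for $u\ge 0$, and for integers $k\ge1$, $P_k:[k,\infty)\to\mathbb{R}$ is the function with $P_k(k)=0$ and $uP_k'(u)=P_{k-1}(u-1)$ for $u\ge k$, i.e. $P_k(u)=\int_k^u P_{k-1}(x-1)\,\frac{dx}{x}$. *)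

theory Defs
  imports "HOL-Analysis.Analysis"
begin

text \<open>Characterisation of the Dickman function (values on [0,inf) matter only).\<close>
definition is_dickman :: "(real \<Rightarrow> real) \<Rightarrow> bool" where
  "is_dickman f \<longleftrightarrow> continuous_on {0..} f \<and> (\<forall>u\<in>{0..1}. f u = 1) \<and>
     (\<forall>u>1. (f has_real_derivative (- f (u - 1) / u)) (at u))"

definition dickman_rho :: "real \<Rightarrow> real" where
  "dickman_rho u = (THE y. \<exists>f. is_dickman f \<and> f u = y)"

text \<open>Characterisation of the Buchstab function (values on [1,inf) matter only).\<close>
definition is_buchstab :: "(real \<Rightarrow> real) \<Rightarrow> bool" where
  "is_buchstab f \<longleftrightarrow> continuous_on {1..} f \<and> (\<forall>u\<in>{1..2}. u * f u = 1) \<and>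
     (\<forall>u>2. (f has_real_derivative ((f (u - 1) - f u) / u)) (at u))"

definition buchstab_omega :: "real \<Rightarrow> real" where
  "buchstab_omega u = (THE y. \<exists>f. is_buchstab f \<and> f u = y)"

definition buch_sigma :: "real \<Rightarrow> real" where
  "buch_sigma u = (u + 1) * buchstab_omega (u + 1)"

text \<open>P_0 = 1, P_k(u) = int_k^u P_{k-1}(x-1) dx/x (only meaningful for u \<ge> k).\<close>
fun Pk :: "nat \<Rightarrow> real \<Rightarrow> real" where
  "Pk 0 u = 1"
| "Pk (Suc k) u = integral {real (Suc k)..u} (\<lambda>x. Pk k (x - 1) / x)"

end

theory Submission
  imports Defs
begin

text \<open>
  Let \<open>S c u = (\<Sum>0 < k < u. c^k * P_k u)\<close>. Below \<open>N + 1\<close> this is a finite sum over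
  \<open>k \<le> N\<close>, and \<open>u * P_k' u = P_(k-1) (u - 1)\<close> turns it into a solution of the delay
  equation \<open>u * S' c u = c * (1 + S c (u - 1))\<close>. Hence \<open>1 + S (-1)\<close> satisfies the equation
  defining \<open>\<rho>\<close> and \<open>v \<mapsto> (1 + S 1 (v - 1)) / v\<close> the one defining \<open>\<omega>\<close>. Such a delay
  equation determines its solution interval by interval from the values on the first unit
  interval, so these are \<open>\<rho>\<close> and \<open>\<omega>\<close>, and \<open>\<sigma> u = (u + 1) * \<omega> (u + 1) = 1 + S 1 u\<close>.
\<close>

lemma Pk_Suc_eq_0: "x \<le> real (Suc k) \<Longrightarrow> Pk (Suc k) x = 0"
  by (cases "x = real (Suc k)") auto

lemma Pk_eq_0: "0 < k \<Longrightarrow> x \<le> real k \<Longrightarrow> Pk k x = 0"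
  by (metis Pk_Suc_eq_0 gr0_conv_Suc)

lemma continuous_on_Pk_integrand:
  assumes "continuous_on {0..} (Pk k)"
  shows "continuous_on {1..b} (\<lambda>y. Pk k (y - 1) / y)"
  by (intro continuous_intros continuous_on_compose2[OF assms]) auto

text \<open>
  For \<open>k > 0\<close> the integrand vanishes on \<open>[1, k + 1]\<close>, so all \<open>P_k\<close> can be written as
  integrals from the common lower limit \<open>1\<close>.
\<close>

lemma Pk_Suc_eq_integral:
  assumes cont: "continuous_on {0..} (Pk k)"
  shows "Pk (Suc k) x = integral {1..max 1 x} (\<lambda>y. Pk k (y - 1) / y)"
proof -
  consider "x \<le> 1" | "1 < x" "k = 0" | "1 < x" "0 < k"
    by fastforce
  then show ?thesis
  proof cases
    case 1
    then show ?thesis using Pk_Suc_eq_0[of x k] by simp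
  next
    case 2
    then show ?thesis by simp
  next
    case 3
    let ?g = "\<lambda>y. Pk k (y - 1) / y"
    have vanish: "integral {1..b} ?g = 0" if "b \<le> real k + 1" for b
    proof -
      have "integral {1..b} ?g = integral {1..b} (\<lambda>_. 0::real)"
        using 3 that by (intro integral_cong) (auto simp: Pk_eq_0)
      then show ?thesis by simp
    qed
    show ?thesis
    proof (cases "x \<le> real k + 1")
      case True
      then show ?thesis using 3 vanish Pk_Suc_eq_0[of x k] by simp
    next
      case False
      have "integral {1..real k + 1} ?g + integral {real k + 1..x} ?g = integral {1..x} ?g"
        using False
        by (intro Henstock_Kurzweil_Integration.integral_combine integrable_continuous_interval
            continuous_on_Pk_integrand cont) auto
      then show ?thesis using 3 vanish[of "real k + 1"] by (simp add: add.commute)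
    qed
  qed
qed

lemma isCont_Pk: "isCont (Pk k) x"
proof (induction k arbitrary: x)
  case 0
  then show ?case by simp
next
  case (Suc k)
  let ?F = "\<lambda>y. integral {1..y} (\<lambda>y. Pk k (y - 1) / y)"
  have cont: "continuous_on {0..} (Pk k)"
    using Suc.IH by (simp add: continuous_at_imp_continuous_on)
  have "continuous_on {1..\<bar>x\<bar> + 2} ?F"
    by (intro indefinite_integral_continuous_1 integrable_continuous_interval
        continuous_on_Pk_integrand cont)
  then have "continuous_on {x - 1..x + 1} (\<lambda>y. ?F (max 1 y))"
    by (rule continuous_on_compose2) (auto intro!: continuous_intros)
  then have "continuous_on {x - 1..x + 1} (Pk (Suc k))"
    by (subst Pk_Suc_eq_integral[OF cont, abs_def])
  then show ?case
    by (rule continuous_on_interior) auto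
qed

lemma DERIV_Pk_Suc:
  assumes "x > 1"
  shows "(Pk (Suc k) has_real_derivative Pk k (x - 1) / x) (at x)"
proof -
  let ?g = "\<lambda>y. Pk k (y - 1) / y"
  have cont: "continuous_on {0..} (Pk k)"
    by (simp add: continuous_at_imp_continuous_on isCont_Pk)
  have "((\<lambda>y. integral {1..y} ?g) has_real_derivative ?g x) (at x within {1..x + 1})"
    using assms by (intro integral_has_real_derivative continuous_on_Pk_integrand cont) auto
  then have "((\<lambda>y. integral {1..y} ?g) has_real_derivative ?g x) (at x)"
    using assms by (simp add: at_within_Icc_at)
  then show ?thesis
    by (rule has_field_derivative_transform_within_open[where S = "{1<..}"])
       (use assms in \<open>auto simp: Pk_Suc_eq_integral[OF cont] simp del: Pk.simps\<close>)
qed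

definition Pk_series :: "real \<Rightarrow> real \<Rightarrow> real" where
  "Pk_series c y = (\<Sum>k::nat | 0 < k \<and> real k < y. c ^ k * Pk k y)"

lemma Pk_series_eq_sum_lessThan:
  assumes "y < real N + 1"
  shows "Pk_series c y = (\<Sum>j<N. c ^ Suc j * Pk (Suc j) y)"
proof -
  have "Pk_series c y = (\<Sum>k\<in>Suc ` {..<N}. c ^ k * Pk k y)"
    unfolding Pk_series_def
  proof (rule sum.mono_neutral_left)
    show "{k. 0 < k \<and> real k < y} \<subseteq> Suc ` {..<N}"
    proof
      fix k assume "k \<in> {k. 0 < k \<and> real k < y}"
      then have "k = Suc (k - 1)" "k - 1 < N"
        using assms by auto
      then show "k \<in> Suc ` {..<N}"
        by blast
    qed
    show "\<forall>k\<in>Suc ` {..<N} - {k. 0 < k \<and> real k < y}. c ^ k * Pk k y = 0"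
      by (auto simp: Pk_eq_0 simp del: Pk.simps)
  qed auto
  then show ?thesis
    by (simp add: sum.reindex)
qed

lemma Pk_series_eq_0:
  assumes "y \<le> 1"
  shows "Pk_series c y = 0"
proof -
  have "{k::nat. 0 < k \<and> real k < y} = {}"
    using assms by auto
  then show ?thesis
    unfolding Pk_series_def by (metis sum.empty)
qed

lemma isCont_Pk_series: "isCont (Pk_series c) x"
proof -
  define N where "N = nat \<lceil>x\<rceil>"
  have "x < real N + 1"
    unfolding N_def by linarith
  then have "\<forall>\<^sub>F y in nhds x. y \<in> {..<real N + 1}"
    by (intro eventually_nhds_in_open) auto
  then have "\<forall>\<^sub>F y in nhds x. (\<Sum>j<N. c ^ Suc j * Pk (Suc j) y) = Pk_series c y"
    by (rule eventually_mono) (simp add: Pk_series_eq_sum_lessThan[of _ N])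
  moreover have "isCont (\<lambda>y. \<Sum>j<N. c ^ Suc j * Pk (Suc j) y) x"
    by (intro continuous_intros isCont_Pk)
  ultimately show ?thesis
    using isCont_cong by (metis (no_types))
qed

lemma DERIV_Pk_series:
  assumes x: "x > 1"
  shows "(Pk_series c has_real_derivative c * (1 + Pk_series c (x - 1)) / x) (at x)"
proof -
  define N where "N = nat \<lceil>x\<rceil>"
  have N: "x < real N + 1"
    unfolding N_def by linarith
  have "((\<lambda>y. \<Sum>j<Suc N. c ^ Suc j * Pk (Suc j) y)
      has_real_derivative (\<Sum>j<Suc N. c ^ Suc j * (Pk j (x - 1) / x))) (at x)"
    using x by (intro DERIV_sum DERIV_cmult DERIV_Pk_Suc)
  also have "(\<Sum>j<Suc N. c ^ Suc j * (Pk j (x - 1) / x))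
      = c / x * (1 + (\<Sum>j<N. c ^ Suc j * Pk (Suc j) (x - 1)))"
    by (subst sum.lessThan_Suc_shift) (simp add: sum_distrib_left algebra_simps del: Pk.simps(2))
  also have "\<dots> = c * (1 + Pk_series c (x - 1)) / x"
    using N Pk_series_eq_sum_lessThan[of "x - 1" N c] by (simp del: Pk.simps(2))
  finally show ?thesis
    by (rule has_field_derivative_transform_within_open[where S = "{..<real (Suc N) + 1}"])
       (use N in \<open>auto simp: Pk_series_eq_sum_lessThan[of _ "Suc N"]\<close>)
qed

lemma delayed_derivative_vanishing:
  fixes h :: "real \<Rightarrow> real"
  assumes cont: "continuous_on {a..} h"
    and initial: "\<And>x. x \<in> {a..a + 1} \<Longrightarrow> h x = 0"
    and step: "\<And>x. x > a + 1 \<Longrightarrow> h (x - 1) = 0 \<Longrightarrow> (h has_real_derivative 0) (at x)"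
    and "x \<ge> a"
  shows "h x = 0"
proof -
  have "\<forall>x\<in>{a..a + 1 + real n}. h x = 0" for n
  proof (induction n)
    case 0
    then show ?case using initial by simp
  next
    case (Suc n)
    have "h x = 0" if x: "a + 1 + real n < x" "x \<le> a + 1 + real (Suc n)" for x
    proof -
      have "h x = h (a + 1 + real n)"
      proof (rule DERIV_isconst_end[where f = h])
        show "continuous_on {a + 1 + real n..x} h"
          using cont by (rule continuous_on_subset) auto
        show "(h has_real_derivative 0) (at y)" if "a + 1 + real n < y" "y < x" for y
          using that x Suc.IH by (intro step) auto
      qed (use x in auto)
      then show ?thesis
        using Suc.IH by simp
    qed
    then show ?case
      using Suc.IH by (metis atLeastAtMost_iff linorder_not_le)
  qed
  moreover have "x \<le> a + 1 + real (nat \<lceil>x - a\<rceil>)"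
    by linarith
  ultimately show ?thesis
    using \<open>x \<ge> a\<close> by (meson atLeastAtMost_iff)
qed

lemma is_dickman_unique:
  assumes f: "is_dickman f" and g: "is_dickman g" and "u \<ge> 0"
  shows "f u = g u"
proof -
  have "f u - g u = 0"
  proof (rule delayed_derivative_vanishing[where h = "\<lambda>x. f x - g x" and a = 0])
    show "continuous_on {0..} (\<lambda>x. f x - g x)"
      using f g by (intro continuous_on_diff) (auto simp: is_dickman_def)
    show "f x - g x = 0" if "x \<in> {0..0 + 1}" for x
      using f g that by (simp add: is_dickman_def)
    show "((\<lambda>x. f x - g x) has_real_derivative 0) (at x)"
      if "x > 0 + 1" "f (x - 1) - g (x - 1) = 0" for x
    proof -
      have "((\<lambda>x. f x - g x) has_real_derivative - f (x - 1) / x - - g (x - 1) / x) (at x)"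
        using f g that by (intro DERIV_diff) (auto simp: is_dickman_def)
      then show ?thesis
        using that by simp
    qed
  qed fact
  then show ?thesis by simp
qed

lemma dickman_rho_eqI:
  assumes "is_dickman f" "u \<ge> 0"
  shows "dickman_rho u = f u"
  unfolding dickman_rho_def using assms is_dickman_unique by blast

lemma is_buchstab_unique:
  assumes f: "is_buchstab f" and g: "is_buchstab g" and u: "u \<ge> 1"
  shows "f u = g u"
proof -
  have "u * (f u - g u) = 0"
  proof (rule delayed_derivative_vanishing[where h = "\<lambda>x. x * (f x - g x)" and a = 1])
    show "continuous_on {1..} (\<lambda>x. x * (f x - g x))"
      using f g by (intro continuous_intros) (auto simp: is_buchstab_def)
    show "x * (f x - g x) = 0" if "x \<in> {1..1 + 1}" for x
      using f g that by (simp add: is_buchstab_def right_diff_distrib)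
    show "((\<lambda>x. x * (f x - g x)) has_real_derivative 0) (at x)"
      if x: "x > 1 + 1" and "(x - 1) * (f (x - 1) - g (x - 1)) = 0" for x
    proof -
      have "f (x - 1) = g (x - 1)"
        using that by simp
      then have "1 * (f x - g x) + ((f (x - 1) - f x) / x - (g (x - 1) - g x) / x) * x = 0"
        using x by (simp add: field_simps)
      moreover have "((\<lambda>x. x * (f x - g x)) has_real_derivative
          1 * (f x - g x) + ((f (x - 1) - f x) / x - (g (x - 1) - g x) / x) * x) (at x)"
        using f g x by (intro DERIV_mult DERIV_ident DERIV_diff) (auto simp: is_buchstab_def)
      ultimately show ?thesis
        by simp
    qed
  qed fact
  then show ?thesis
    using u by simp
qed

lemma buchstab_omega_eqI:
  assumes "is_buchstab f" "u \<ge> 1"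
  shows "buchstab_omega u = f u"
  unfolding buchstab_omega_def using assms is_buchstab_unique by blast

lemma is_dickman_Pk_series: "is_dickman (\<lambda>y. 1 + Pk_series (-1) y)"
  unfolding is_dickman_def
proof (intro conjI ballI allI impI)
  show "continuous_on {0..} (\<lambda>y. 1 + Pk_series (-1) y)"
    by (intro continuous_at_imp_continuous_on ballI continuous_intros isCont_Pk_series)
  show "1 + Pk_series (-1) u = 1" if "u \<in> {0..1}" for u
    using that by (simp add: Pk_series_eq_0)
  show "((\<lambda>y. 1 + Pk_series (-1) y) has_real_derivative
      - (1 + Pk_series (-1) (u - 1)) / u) (at u)" if "u > 1" for u
  proof -
    have "((\<lambda>y. 1 + Pk_series (-1) y) has_real_derivative
        0 + (-1) * (1 + Pk_series (-1) (u - 1)) / u) (at u)"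
      using that by (intro DERIV_add DERIV_const DERIV_Pk_series)
    then show ?thesis
      by simp
  qed
qed

lemma is_buchstab_Pk_series: "is_buchstab (\<lambda>v. (1 + Pk_series 1 (v - 1)) / v)"
  unfolding is_buchstab_def
proof (intro conjI ballI allI impI)
  have shifted: "isCont (\<lambda>v. Pk_series 1 (v - 1)) v" for v
    by (rule isCont_o2[OF _ isCont_Pk_series]) simp
  show "continuous_on {1..} (\<lambda>v. (1 + Pk_series 1 (v - 1)) / v)"
    by (intro continuous_at_imp_continuous_on ballI continuous_intros shifted) auto
  show "u * ((1 + Pk_series 1 (u - 1)) / u) = 1" if "u \<in> {1..2}" for u
    using that by (simp add: Pk_series_eq_0)
  show "((\<lambda>v. (1 + Pk_series 1 (v - 1)) / v) has_real_derivative
      ((1 + Pk_series 1 (v - 1 - 1)) / (v - 1) - (1 + Pk_series 1 (v - 1)) / v) / v) (at v)"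
    if v: "v > 2" for v
  proof -
    have "((\<lambda>v. Pk_series 1 (v - 1)) has_real_derivative
        (1 + Pk_series 1 (v - 1 - 1)) / (v - 1)) (at v)"
      using DERIV_chain2[OF DERIV_Pk_series[of "v - 1" 1] DERIV_diff[OF DERIV_ident DERIV_const]] v
      by simp
    then have "((\<lambda>v. (1 + Pk_series 1 (v - 1)) / v) has_real_derivative
        ((0 + (1 + Pk_series 1 (v - 1 - 1)) / (v - 1)) * v - (1 + Pk_series 1 (v - 1)) * 1)
          / (v * v)) (at v)"
      using v by (intro DERIV_divide DERIV_add DERIV_const DERIV_ident) auto
    then show ?thesis
      using v by (simp add: field_simps)
  qed
qed

theorem mainTheorem3:
  fixes u :: real
  assumes "u > 1"
  shows "buch_sigma u = 1 + (\<Sum>k::nat | 0 < k \<and> real k < u. Pk k u) \<and>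
         dickman_rho u = 1 + (\<Sum>k::nat | 0 < k \<and> real k < u. (-1) ^ k * Pk k u)"
proof
  have "buch_sigma u = 1 + Pk_series 1 u"
    using assms buchstab_omega_eqI[OF is_buchstab_Pk_series, of "u + 1"]
    by (simp add: buch_sigma_def)
  then show "buch_sigma u = 1 + (\<Sum>k::nat | 0 < k \<and> real k < u. Pk k u)"
    by (simp add: Pk_series_def)
  show "dickman_rho u = 1 + (\<Sum>k::nat | 0 < k \<and> real k < u. (-1) ^ k * Pk k u)"
    using assms dickman_rho_eqI[OF is_dickman_Pk_series, of u] by (simp add: Pk_series_def)
qed

end
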